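(* The variety $\mathcal{V}_{\sigma\ell\mathbb{G}}$ is generated by $\mathbb{R}$: every $G\in\mathcal{V}_{\sigma\ell\mathbb{G}}$ is isomorphic to a subalgebra of a homomorphic image (quotient) of a power of the algebra $(\mathbb{R},0,+,-,\vee,\wedge,\bigvee^-)$, where in $\mathbb{R}$ one sets $\bigvee^-(g,f_1,f_2,\dots)=\sup_{n\ge1}\{f_n\wedge g\}$. In particular $\mathcal{V}_{\sigma\ell\mathbb{G}}$ is the class of all algebras in its language satisfying every equation true in $\mathbb{R}$.
   Context: $\mathcal{V}_{\sigma\ell\mathbb{G}}$ is the infinitary variety of algebras $(G,0,+,-,\vee,\wedge,\bigvee^-)$, $\bigvee^-$ of countably infinite arity with $\bigvee_{n\ge1}^g f_n:=\bigvee^-(g,f_1,f_2,\dots)$, satisfying the $\ell$-group axioms and (A1) $\bigvee_{n\ge1}^g f_n=\bigvee_{n\ge1}^g(f_n\wedge g)$; (A2) $\bigvee_{n\ge1}^g f_n=(f_1\wedge g)\vee\bigvee^-(g,f_2,f_3,\dots)$; (A3) $\bigvee_{n\ge1}^g(f_n\wedge h)\le h$ ($a\le b$ meaning $a\wedge b=a$). Morphisms preserve all operations. *)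

theory Defs
  imports Main "HOL.Real"
begin

text \<open>The infinitary operation bigvee-minus(g, f_1, f_2, ...) is represented by
  sbv g f with f 0 = f_1, f 1 = f_2, etc.  The carrier is the whole type.\<close>

record 'a sl_alg =
  szero :: 'a
  splus :: "'a \<Rightarrow> 'a \<Rightarrow> 'a"
  sneg  :: "'a \<Rightarrow> 'a"
  sjoin :: "'a \<Rightarrow> 'a \<Rightarrow> 'a"
  smeet :: "'a \<Rightarrow> 'a \<Rightarrow> 'a"
  sbv   :: "'a \<Rightarrow> (nat \<Rightarrow> 'a) \<Rightarrow> 'a"

definition sle :: "'a sl_alg \<Rightarrow> 'a \<Rightarrow> 'a \<Rightarrow> bool" where
  "sle A a b \<longleftrightarrow> smeet A a b = a"

definition lgroup_axioms :: "'a sl_alg \<Rightarrow> bool" where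
  "lgroup_axioms A \<longleftrightarrow>
     (\<forall>x y z. splus A (splus A x y) z = splus A x (splus A y z)) \<and>
     (\<forall>x y. splus A x y = splus A y x) \<and>
     (\<forall>x. splus A (szero A) x = x) \<and>
     (\<forall>x. splus A (sneg A x) x = szero A) \<and>
     (\<forall>x y z. sjoin A (sjoin A x y) z = sjoin A x (sjoin A y z)) \<and>
     (\<forall>x y z. smeet A (smeet A x y) z = smeet A x (smeet A y z)) \<and>
     (\<forall>x y. sjoin A x y = sjoin A y x) \<and>
     (\<forall>x y. smeet A x y = smeet A y x) \<and>
     (\<forall>x y. sjoin A x (smeet A x y) = x) \<and>
     (\<forall>x y. smeet A x (sjoin A x y) = x) \<and>
     (\<forall>x y z. splus A x (sjoin A y z) = sjoin A (splus A x y) (splus A x z)) \<and>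
     (\<forall>x y z. splus A x (smeet A y z) = smeet A (splus A x y) (splus A x z))"

definition in_V_slG :: "'a sl_alg \<Rightarrow> bool" where
  "in_V_slG A \<longleftrightarrow> lgroup_axioms A \<and>
     (\<forall>g f. sbv A g f = sbv A g (\<lambda>n. smeet A (f n) g)) \<and>
     (\<forall>g f. sbv A g f = sjoin A (smeet A (f 0) g) (sbv A g (\<lambda>n. f (Suc n)))) \<and>
     (\<forall>g h f. sle A (sbv A g (\<lambda>n. smeet A (f n) h)) h)"

definition real_alg :: "real sl_alg" where
  "real_alg = \<lparr> szero = 0, splus = (+), sneg = uminus, sjoin = max, smeet = min,
                sbv = (\<lambda>g f. SUP n. min (f n) g) \<rparr>"

definition power_alg :: "('i \<Rightarrow> real) sl_alg" where
  "power_alg = \<lparr> szero = (\<lambda>i. 0),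
                 splus = (\<lambda>x y i. x i + y i),
                 sneg = (\<lambda>x i. - x i),
                 sjoin = (\<lambda>x y i. max (x i) (y i)),
                 smeet = (\<lambda>x y i. min (x i) (y i)),
                 sbv = (\<lambda>g f i. SUP n. min (f n i) (g i)) \<rparr>"

definition congruence :: "'a sl_alg \<Rightarrow> ('a \<Rightarrow> 'a \<Rightarrow> bool) \<Rightarrow> bool" where
  "congruence A \<theta> \<longleftrightarrow> equivp \<theta> \<and>
     (\<forall>x x' y y'. \<theta> x x' \<and> \<theta> y y' \<longrightarrow> \<theta> (splus A x y) (splus A x' y')) \<and>
     (\<forall>x x'. \<theta> x x' \<longrightarrow> \<theta> (sneg A x) (sneg A x')) \<and>
     (\<forall>x x' y y'. \<theta> x x' \<and> \<theta> y y' \<longrightarrow> \<theta> (sjoin A x y) (sjoin A x' y')) \<and>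
     (\<forall>x x' y y'. \<theta> x x' \<and> \<theta> y y' \<longrightarrow> \<theta> (smeet A x y) (smeet A x' y')) \<and>
     (\<forall>g g' f f'. \<theta> g g' \<and> (\<forall>n. \<theta> (f n) (f' n)) \<longrightarrow> \<theta> (sbv A g f) (sbv A g' f'))"

text \<open>e represents (via chosen representatives) an injective homomorphism from G
  into the quotient algebra B/theta; equivalently G is isomorphic to a subalgebra
  (the image) of the homomorphic image B/theta.\<close>
definition embeds_into_quotient ::
  "'a sl_alg \<Rightarrow> 'b sl_alg \<Rightarrow> ('b \<Rightarrow> 'b \<Rightarrow> bool) \<Rightarrow> ('a \<Rightarrow> 'b) \<Rightarrow> bool" where
  "embeds_into_quotient G B \<theta> e \<longleftrightarrow>
     (\<forall>x y. \<theta> (e x) (e y) \<longleftrightarrow> x = y) \<and>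
     \<theta> (e (szero G)) (szero B) \<and>
     (\<forall>x y. \<theta> (e (splus G x y)) (splus B (e x) (e y))) \<and>
     (\<forall>x. \<theta> (e (sneg G x)) (sneg B (e x))) \<and>
     (\<forall>x y. \<theta> (e (sjoin G x y)) (sjoin B (e x) (e y))) \<and>
     (\<forall>x y. \<theta> (e (smeet G x y)) (smeet B (e x) (e y))) \<and>
     (\<forall>g f. \<theta> (e (sbv G g f)) (sbv B (e g) (\<lambda>n. e (f n))))"

end

theory Submission
  imports Defs "HOL-Library.Lattice_Algebras" "HOL-Library.Countable_Set"
begin

text \<open>Every algebra of the variety is an abelian \<open>\<ell>\<close>-group in which
  \<open>\<Or>\<^sup>- (g, f\<^sub>1, f\<^sub>2, \<dots>)\<close> is the supremum of the \<open>f\<^sub>n \<and> g\<close>.  Given \<open>x \<noteq> y\<close> and countably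
  many instances of the operations, let \<open>E\<close> be the countable \<open>\<ell>\<close>-subgroup they generate and
  \<open>d = |x - y|\<close>.  A descending chain of positive elements below \<open>d\<close> is refined step by step
  so that it eventually decides the sign of every element of \<open>E\<close>, bounds it by a multiple of
  \<open>d\<close>, and sees each countable join approximated by its finite partial joins up to
  \<open>d / (m + 1)\<close>; the countable joins make the group Archimedean enough for all refinements
  to exist.  The chain induces a total cone on
  \<open>E\<close> with strong unit \<open>d\<close>, and measuring elements against \<open>d\<close> by Dedekind cuts gives a
  homomorphism \<open>E \<rightarrow> \<real>\<close> that separates \<open>x\<close> and \<open>y\<close> and respects the given instances.

  In the power of \<open>\<real>\<close> indexed by such maps, identify two functions that differ only on a set
  covered by countably many sets of maps violating some instance.  Since these sets form a
  \<open>\<sigma>\<close>-ideal, the identification is compatible with the countable operation, and evaluation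
  embeds \<open>G\<close> into the quotient because a separating map violates none of the instances.\<close>

context ab_group_add
begin

primrec nmul :: "nat \<Rightarrow> 'a \<Rightarrow> 'a" where
  "nmul 0 x = 0"
| "nmul (Suc n) x = x + nmul n x"

lemma nmul_zero [simp]: "nmul n 0 = 0"
  by (induct n) simp_all

lemma nmul_add: "nmul (m + n) x = nmul m x + nmul n x"
  by (induct m) (simp_all add: add.assoc)

lemma nmul_mult: "nmul (m * n) x = nmul m (nmul n x)"
  by (induct m) (simp_all add: nmul_add)

lemma nmul_add_right: "nmul n (x + y) = nmul n x + nmul n y"
  by (induct n) (simp_all add: algebra_simps)

lemma nmul_uminus: "nmul n (- x) = - nmul n x"
  by (induct n) (simp_all add: minus_add_distrib)

lemma nmul_diff_right: "nmul n (x - y) = nmul n x - nmul n y"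
  unfolding diff_conv_add_uminus by (simp only: nmul_add_right nmul_uminus)

definition imul :: "int \<Rightarrow> 'a \<Rightarrow> 'a" where
  "imul i x = nmul (nat i) x - nmul (nat (- i)) x"

lemma imul_of_nat_diff: "imul (int m - int n) x = nmul m x - nmul n x"
proof (cases "n \<le> m")
  case True
  then obtain k where "m = n + k" using le_Suc_ex by blast
  then show ?thesis by (simp add: imul_def nmul_add)
next
  case False
  then obtain k where "n = m + k" using le_Suc_ex nat_le_linear by blast
  then show ?thesis by (simp add: imul_def nmul_add algebra_simps)
qed

lemma int_diff_of_nat_cases: obtains m n where "(i::int) = int m - int n"
proof
  show "i = int (nat i) - int (nat (- i))" by simp
qed

lemma imul_add: "imul (i + j) x = imul i x + imul j x"
proof -
  obtain a b c e where "i = int a - int b" "j = int c - int e"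
    by (metis int_diff_of_nat_cases)
  moreover have "int a - int b + (int c - int e) = int (a + c) - int (b + e)" by simp
  ultimately show ?thesis by (simp only: imul_of_nat_diff nmul_add) (simp add: algebra_simps)
qed

lemma imul_mult: "imul (i * j) x = imul i (imul j x)"
proof -
  obtain a b c e where ij: "i = int a - int b" "j = int c - int e"
    by (metis int_diff_of_nat_cases)
  have "(int a - int b) * (int c - int e) = int (a * c + b * e) - int (a * e + b * c)"
    by (simp add: algebra_simps)
  then show ?thesis unfolding ij
    by (simp only: imul_of_nat_diff nmul_diff_right nmul_add nmul_mult) (simp add: algebra_simps)
qed

lemma imul_of_nat [simp]: "imul (int n) x = nmul n x"
  by (simp add: imul_def)

lemma imul_zero_left [simp]: "imul 0 x = 0"
  and imul_one_left [simp]: "imul 1 x = x"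
  by (simp_all add: imul_def)

lemma imul_uminus_left: "imul (- i) x = - imul i x"
  by (simp add: imul_def)

lemma imul_diff_left: "imul (i - j) x = imul i x - imul j x"
  using imul_add[of i "- j" x] by (simp add: imul_uminus_left)

lemma nmul_imul: "nmul n (imul i x) = imul (int n * i) x"
  by (simp add: imul_mult)

end

context ordered_ab_group_add
begin

lemma nmul_nonneg: "0 \<le> x \<Longrightarrow> 0 \<le> nmul n x"
  by (induct n) (simp_all add: add_nonneg_nonneg)

lemma nmul_mono: "x \<le> y \<Longrightarrow> nmul n x \<le> nmul n y"
  by (induct n) (simp_all add: add_mono)

end

context lattice_ab_group_add
begin

lemma inf_pprt_pprt_uminus: "inf (pprt x) (pprt (- x)) = 0"
proof -
  have "pprt (- x) = pprt x + - x"
    unfolding pprt_def add_sup_distrib_right by (simp add: sup_commute)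
  then have "inf (pprt x) (pprt (- x)) = pprt x + inf 0 (- x)"
    by (simp add: add_inf_distrib_left)
  also have "inf 0 (- x) = - pprt x"
    by (simp add: pprt_def neg_sup_eq_inf inf_commute)
  finally show ?thesis by simp
qed

lemma inf_add_le_add_inf:
  assumes "0 \<le> c" "0 \<le> u" "0 \<le> v"
  shows "inf c (u + v) \<le> inf c u + inf c v"
proof -
  have "inf c (u + v) \<le> inf (inf (c + c) (u + c)) (inf (c + v) (u + v))"
    using assms by (simp add: add_increasing add_increasing2 le_infI1 le_infI2)
  also have "\<dots> = inf c u + inf c v"
    by (simp only: add_inf_distrib_left add_inf_distrib_right)
  finally show ?thesis .
qed

lemma inf_eq_zero_antimono:
  assumes "0 \<le> u'" "0 \<le> v'" "u' \<le> u" "v' \<le> v" "inf u v = 0"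
  shows "inf u' v' = 0"
proof (rule order.antisym)
  show "inf u' v' \<le> 0" using assms(3-5) inf_mono by metis
qed (use assms(1,2) in simp)

lemma inf_nmul_eq_zero:
  assumes "0 \<le> a" "0 \<le> b" "inf a b = 0"
  shows "inf a (nmul m b) = 0"
proof (induct m)
  case (Suc m)
  have "inf a (nmul (Suc m) b) \<le> inf a b + inf a (nmul m b)"
    using inf_add_le_add_inf[OF assms(1,2) nmul_nonneg[OF assms(2)]] by simp
  then show ?case using assms Suc nmul_nonneg[of b "Suc m"] by (simp add: order.antisym)
qed (simp add: assms inf_absorb2)

lemma sup_uminus_nonneg: "0 \<le> sup a (- a)"
proof -
  have "a + - a \<le> sup a (- a) + sup a (- a)" by (intro add_mono sup_ge1 sup_ge2)
  then show ?thesis by simp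
qed

lemma pprt_uminus_le_add: "pprt (- (z + w)) \<le> pprt (- z) + pprt (- w)"
proof -
  have "- (z + w) \<le> pprt (- z) + pprt (- w)"
    unfolding minus_add_distrib pprt_def add.commute[of "- w"] by (intro add_mono sup_ge1)
  then show ?thesis
    unfolding pprt_def[of "- (z + w)"] by (rule sup_least) (simp add: add_nonneg_nonneg)
qed

end

context lattice
begin

primrec partial_join :: "'a \<Rightarrow> (nat \<Rightarrow> 'a) \<Rightarrow> nat \<Rightarrow> 'a" where
  "partial_join g f 0 = inf (f 0) g"
| "partial_join g f (Suc k) = sup (partial_join g f k) (inf (f (Suc k)) g)"

lemma inf_le_partial_join: "inf (f k) g \<le> partial_join g f k"
  by (cases k) simp_all

lemma partial_join_mono: "k \<le> k' \<Longrightarrow> partial_join g f k \<le> partial_join g f k'"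
  by (induct k' rule: dec_induct) (simp_all add: le_supI1)

end

section \<open>Countable bounded joins\<close>

class sigma_lattice_ab_group = lattice_ab_group_add +
  fixes bjoin :: "'a \<Rightarrow> (nat \<Rightarrow> 'a) \<Rightarrow> 'a"
  assumes inf_le_bjoin: "inf (f n) g \<le> bjoin g f"
    and bjoin_least: "(\<And>n. inf (f n) g \<le> h) \<Longrightarrow> bjoin g f \<le> h"
begin

lemma nmul_bounded_imp_nonpos:
  assumes c: "0 \<le> c" and w: "\<And>m. nmul m c \<le> w"
  shows "c \<le> 0"
proof -
  \<comment> \<open>the join \<open>s\<close> of all multiples of \<open>c\<close> satisfies \<open>s \<le> s - c\<close>\<close>
  define s where "s = bjoin w (\<lambda>m. nmul m c)"
  have eq: "inf (nmul m c) w = nmul m c" for m using w by (rule inf_absorb1)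
  have "nmul m c \<le> s" for m using inf_le_bjoin[of "\<lambda>m. nmul m c" m w] by (simp add: s_def eq)
  then have "s \<le> s - c"
    unfolding s_def by (intro bjoin_least) (metis eq le_diff_eq add.commute nmul.simps(2))
  then show ?thesis by (simp add: le_diff_eq)
qed

lemma partial_join_le_bjoin: "partial_join g f k \<le> bjoin g f"
  by (induct k) (simp_all add: inf_le_bjoin)

lemma bjoin_le_if_partial_join_le: "(\<And>k. partial_join g f k \<le> h) \<Longrightarrow> bjoin g f \<le> h"
  by (rule bjoin_least) (rule order.trans[OF inf_le_partial_join])

lemma nmul_bjoin_le_if_partial_join_le:
  "(\<And>k. nmul M (partial_join g f k) \<le> t) \<Longrightarrow> nmul M (bjoin g f) \<le> t"
proof (induct M arbitrary: t)
  case (Suc M)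
  have "nmul M (partial_join g f k0) \<le> t - bjoin g f" for k0
  proof -
    have "bjoin g f \<le> t - nmul M (partial_join g f k0)"
    proof (rule bjoin_le_if_partial_join_le)
      fix n
      define K where "K = max n k0"
      have "partial_join g f n + nmul M (partial_join g f k0)
          \<le> partial_join g f K + nmul M (partial_join g f K)"
        by (intro add_mono nmul_mono partial_join_mono) (simp_all add: K_def)
      also have "\<dots> \<le> t" using Suc(2)[of K] by simp
      finally show "partial_join g f n \<le> t - nmul M (partial_join g f k0)"
        by (simp add: le_diff_eq)
    qed
    then show ?thesis by (simp add: le_diff_eq add.commute)
  qed
  then have "nmul M (bjoin g f) \<le> t - bjoin g f" by (rule Suc(1))
  then show ?case by (simp add: le_diff_eq add.commute)
qed simp

lemma bjoin_defect_multiples_imp_nonpos: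
  assumes "\<And>k. c \<le> nmul (Suc m) (bjoin g f - partial_join g f k)"
  shows "c \<le> 0"
proof -
  have "nmul (Suc m) (partial_join g f k) \<le> nmul (Suc m) (bjoin g f) - c" for k
    using assms[of k] by (simp only: nmul_diff_right le_diff_eq add.commute)
  then have "nmul (Suc m) (bjoin g f) \<le> nmul (Suc m) (bjoin g f) - c"
    by (rule nmul_bjoin_le_if_partial_join_le)
  then show ?thesis by (simp add: le_diff_eq)
qed

end

section \<open>Descending chains of positive elements\<close>

context lattice_ab_group_add
begin

definition pos_below :: "'a \<Rightarrow> 'a \<Rightarrow> bool" where
  "pos_below d c \<longleftrightarrow> 0 \<le> c \<and> c \<noteq> 0 \<and> c \<le> d"

lemma pos_below_refine_sign:
  assumes c: "pos_below d c"
  shows "\<exists>c'. pos_below d c' \<and> c' \<le> c \<and> (inf c' (pprt (- a)) = 0 \<or> inf c' (pprt a) = 0)"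
proof (cases "inf c (pprt a) = 0")
  case False
  define c' where "c' = inf c (pprt a)"
  have c0: "0 \<le> c" and cd: "c \<le> d" using c by (simp_all add: pos_below_def)
  have "pos_below d c'"
    using False c0 cd by (simp add: pos_below_def c'_def le_infI1)
  moreover have "inf c' (pprt (- a)) = 0"
    using c0 by (intro inf_eq_zero_antimono[OF _ _ _ order.refl inf_pprt_pprt_uminus])
      (simp_all add: c'_def)
  ultimately show ?thesis by (auto simp: c'_def)
qed (use c in blast)

lemma pos_below_refine_exceed:
  assumes c: "pos_below d c" and b: "0 \<le> b" and cb: "\<not> c \<le> b"
  shows "\<exists>c'. pos_below d c' \<and> c' \<le> c \<and> inf c' (pprt (b - d)) = 0"
proof -
  define c' where "c' = pprt (c - b)"
  have c0: "0 \<le> c" and cd: "c \<le> d" using c by (simp_all add: pos_below_def)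
  have c'c: "c' \<le> c" using b c0 by (simp add: c'_def pprt_def diff_le_eq)
  have "c' \<noteq> 0" using cb by (simp add: c'_def pprt_def sup_absorb2 sup.absorb_iff2[symmetric])
  then have "pos_below d c'" using c'c cd by (simp add: pos_below_def c'_def)
  moreover have "inf c' (pprt (b - d)) = 0"
  proof (rule inf_eq_zero_antimono[OF _ _ _ _ inf_pprt_pprt_uminus[of "d - b"]])
    show "c' \<le> pprt (d - b)" using cd by (simp add: c'_def diff_right_mono)
  qed (simp_all add: c'_def)
  ultimately show ?thesis using c'c by blast
qed

text \<open>A descending chain plays the role of a point of a representation of the group by real
  functions: \<open>z\<close> lies in the cone of the chain when its negative part vanishes below some
  member of the chain.\<close>

definition chain_cone :: "(nat \<Rightarrow> 'a) \<Rightarrow> 'a \<Rightarrow> bool" where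
  "chain_cone ch z \<longleftrightarrow> (\<exists>j. inf (ch j) (pprt (- z)) = 0)"

lemma chain_cone_inf_zero: "chain_cone ch z \<Longrightarrow> chain_cone ch (inf z 0)"
  by (simp add: chain_cone_def pprt_def neg_inf_eq_sup)

context
  fixes ch :: "nat \<Rightarrow> 'a" and d :: 'a
  assumes chain_Suc: "\<And>j. ch (Suc j) \<le> ch j"
    and chain_pos: "\<And>j. pos_below d (ch j)"
begin

lemma chain_antimono: "j \<le> j' \<Longrightarrow> ch j' \<le> ch j"
  by (induct j' rule: dec_induct) (simp, metis chain_Suc order.trans)

lemma chain_nonneg: "0 \<le> ch j"
  using chain_pos by (simp add: pos_below_def)

lemma chain_cone_nonneg:
  assumes "0 \<le> z"
  shows "chain_cone ch z"
proof -
  have "inf (ch 0) (pprt (- z)) = 0" using assms chain_nonneg[of 0] by (simp add: inf_absorb2)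
  then show ?thesis by (auto simp: chain_cone_def)
qed

lemma chain_cone_add:
  assumes "chain_cone ch z" "chain_cone ch w"
  shows "chain_cone ch (z + w)"
proof -
  obtain i j where i: "inf (ch i) (pprt (- z)) = 0" and j: "inf (ch j) (pprt (- w)) = 0"
    using assms by (auto simp: chain_cone_def)
  define k where "k = max i j"
  have "ch k \<le> ch i" "ch k \<le> ch j" by (simp_all add: k_def chain_antimono)
  then have zk: "inf (ch k) (pprt (- z)) = 0" and wk: "inf (ch k) (pprt (- w)) = 0"
    using chain_nonneg i j by (metis inf_eq_zero_antimono zero_le_pprt order.refl)+
  have "inf (ch k) (pprt (- (z + w))) \<le> inf (ch k) (pprt (- z) + pprt (- w))"
    by (rule inf_mono[OF order.refl pprt_uminus_le_add])
  also have "\<dots> \<le> inf (ch k) (pprt (- z)) + inf (ch k) (pprt (- w))"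
    by (rule inf_add_le_add_inf[OF chain_nonneg zero_le_pprt zero_le_pprt])
  finally have "inf (ch k) (pprt (- (z + w))) = 0"
    using chain_nonneg[of k] zk wk by (simp add: order.antisym)
  then show ?thesis by (auto simp: chain_cone_def)
qed

lemma not_chain_cone_uminus: "\<not> chain_cone ch (- d)"
proof
  assume "chain_cone ch (- d)"
  then obtain j where j: "inf (ch j) (pprt d) = 0" by (auto simp: chain_cone_def)
  have "0 \<le> ch j" "ch j \<noteq> 0" "ch j \<le> d" using chain_pos[of j] by (simp_all add: pos_below_def)
  then have "inf (ch j) (pprt d) = ch j" by (simp add: inf_absorb1)
  with j \<open>ch j \<noteq> 0\<close> show False by simp
qed

end

end

context sigma_lattice_ab_group
begin

lemma pos_below_refine_bound:
  assumes c: "pos_below d c" and w: "0 \<le> w"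
  shows "\<exists>c' M. pos_below d c' \<and> c' \<le> c \<and> inf c' (pprt (w - nmul M d)) = 0"
proof (cases "\<exists>m. pprt (c - pprt (w - nmul m d)) \<noteq> 0")
  case True
  then obtain m where m: "pprt (c - pprt (w - nmul m d)) \<noteq> 0" by blast
  define u where "u = pprt (w - nmul m d)"
  define c' where "c' = pprt (c - u)"
  have c'c: "c' \<le> c" using c by (simp add: c'_def u_def pprt_def pos_below_def diff_le_eq)
  moreover have "pos_below d c'"
    using c c'c m by (auto simp: pos_below_def c'_def u_def)
  moreover have "inf c' (pprt (w - nmul (Suc m) d)) = 0"
  proof (rule inf_eq_zero_antimono[OF _ _ _ _ inf_pprt_pprt_uminus[of "d - u"]])
    show "c' \<le> pprt (d - u)"
      using c by (simp add: c'_def pos_below_def diff_right_mono)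
    have "w - nmul m d \<le> u" by (simp add: u_def pprt_def)
    then have "w - nmul (Suc m) d \<le> - (d - u)" by (simp add: algebra_simps)
    then show "pprt (w - nmul (Suc m) d) \<le> pprt (- (d - u))" by (rule pprt_mono)
  qed (simp_all add: c'_def)
  ultimately show ?thesis by blast
next
  case False
  \<comment> \<open>then every multiple of \<open>c\<close> lies below \<open>w\<close>, which the bounded joins forbid\<close>
  then have cu: "c \<le> pprt (w - nmul m d)" for m
    by (auto simp: le_zero_iff_zero_pprt[symmetric])
  have c0: "0 \<le> c" and cd: "c \<le> d" and cne: "c \<noteq> 0" using c by (auto simp: pos_below_def)
  have "nmul m c \<le> w" for m
  proof -
    define z where "z = pprt (nmul m c - w)"
    have "inf (pprt (nmul m d - w)) (nmul m (pprt (w - nmul m d))) = 0"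
      using inf_pprt_pprt_uminus[of "w - nmul m d"]
      by (intro inf_nmul_eq_zero) (simp_all add: inf_commute)
    moreover have "z \<le> pprt (nmul m d - w)"
      unfolding z_def using cd by (intro pprt_mono diff_right_mono nmul_mono)
    moreover have "z \<le> nmul m (pprt (w - nmul m d))"
    proof -
      have "z \<le> pprt (nmul m c)" unfolding z_def using w by (intro pprt_mono) (simp add: diff_le_eq)
      also have "\<dots> = nmul m c" using nmul_nonneg[OF c0] by simp
      also have "\<dots> \<le> nmul m (pprt (w - nmul m d))" using cu by (rule nmul_mono)
      finally show ?thesis .
    qed
    ultimately have "z \<le> 0" by (metis le_infI)
    then show ?thesis by (simp add: z_def pprt_def)
  qed
  then have "c \<le> 0" by (rule nmul_bounded_imp_nonpos[OF c0])
  then show ?thesis using c0 cne by (simp add: order.antisym)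
qed

end

section \<open>Real-valued homomorphisms from total cones\<close>

lemma le_if_le_add_div_Suc:
  fixes x y c :: real
  assumes "\<And>m. x \<le> y + c / real (Suc m)"
  shows "x \<le> y"
proof (rule field_le_epsilon)
  fix e :: real
  assume "0 < e"
  then obtain n :: nat where "c < real n * e" using ex_less_of_nat_mult by blast
  then have "c / real (Suc n) < e"
    using \<open>0 < e\<close> by (simp add: divide_less_eq algebra_simps)
  then show "x \<le> y + e" using assms[of n] by linarith
qed

context lattice_ab_group_add
begin

definition sublattice_subgroup :: "'a set \<Rightarrow> bool" where
  "sublattice_subgroup E \<longleftrightarrow> 0 \<in> E \<and> (\<forall>a\<in>E. - a \<in> E) \<and>
     (\<forall>a\<in>E. \<forall>b\<in>E. a + b \<in> E \<and> sup a b \<in> E \<and> inf a b \<in> E)"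

context
  fixes E :: "'a set"
  assumes E: "sublattice_subgroup E"
begin

lemma sublattice_subgroup_zero: "0 \<in> E"
  and sublattice_subgroup_uminus: "a \<in> E \<Longrightarrow> - a \<in> E"
  and sublattice_subgroup_add: "a \<in> E \<Longrightarrow> b \<in> E \<Longrightarrow> a + b \<in> E"
  and sublattice_subgroup_sup: "a \<in> E \<Longrightarrow> b \<in> E \<Longrightarrow> sup a b \<in> E"
  and sublattice_subgroup_inf: "a \<in> E \<Longrightarrow> b \<in> E \<Longrightarrow> inf a b \<in> E"
  using E by (simp_all add: sublattice_subgroup_def)

lemma sublattice_subgroup_diff: "a \<in> E \<Longrightarrow> b \<in> E \<Longrightarrow> a - b \<in> E"
  unfolding diff_conv_add_uminus by (intro sublattice_subgroup_add sublattice_subgroup_uminus)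

lemma sublattice_subgroup_nmul: "a \<in> E \<Longrightarrow> nmul n a \<in> E"
  by (induct n) (simp_all add: sublattice_subgroup_zero sublattice_subgroup_add)

lemma sublattice_subgroup_imul: "a \<in> E \<Longrightarrow> imul i a \<in> E"
  unfolding imul_def by (intro sublattice_subgroup_diff sublattice_subgroup_nmul)

lemma sublattice_subgroup_pprt: "a \<in> E \<Longrightarrow> pprt a \<in> E"
  unfolding pprt_def by (intro sublattice_subgroup_sup sublattice_subgroup_zero)

lemma sublattice_subgroup_partial_join:
  "g \<in> E \<Longrightarrow> (\<And>i. f i \<in> E) \<Longrightarrow> partial_join g f k \<in> E"
  by (induct k) (simp_all add: sublattice_subgroup_inf sublattice_subgroup_sup)

end

lemmas sublattice_subgroup_closed =
  sublattice_subgroup_zero sublattice_subgroup_uminus sublattice_subgroup_add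
  sublattice_subgroup_sup sublattice_subgroup_inf sublattice_subgroup_diff
  sublattice_subgroup_nmul sublattice_subgroup_imul sublattice_subgroup_pprt

text \<open>\<open>T\<close> is the cone \<open>{z. 0 \<preceq> z}\<close> of a total preorder on \<open>E\<close> compatible with addition
  and with \<open>inf _ 0\<close>, in which \<open>d\<close> is positive and a strong unit.  \<open>cut_value T d a\<close>
  measures \<open>a\<close> in units of \<open>d\<close>, as the Dedekind cut of the fractions \<open>p / q\<close> with
  \<open>p d \<preceq> q a\<close>.\<close>

definition unit_cone :: "'a set \<Rightarrow> ('a \<Rightarrow> bool) \<Rightarrow> 'a \<Rightarrow> bool" where
  "unit_cone E T d \<longleftrightarrow> sublattice_subgroup E \<and> d \<in> E \<and>
     (\<forall>z w. T z \<longrightarrow> T w \<longrightarrow> T (z + w)) \<and> (\<forall>z. 0 \<le> z \<longrightarrow> T z) \<and>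
     (\<forall>z. T z \<longrightarrow> T (inf z 0)) \<and> \<not> T (- d) \<and>
     (\<forall>a\<in>E. T a \<or> T (- a)) \<and> (\<forall>a\<in>E. \<exists>M. T (nmul M d - sup a (- a)))"

definition cut_set :: "('a \<Rightarrow> bool) \<Rightarrow> 'a \<Rightarrow> 'a \<Rightarrow> real set" where
  "cut_set T d a = {of_int p / of_nat q | p q. 0 < q \<and> T (nmul q a - imul p d)}"

definition cut_value :: "('a \<Rightarrow> bool) \<Rightarrow> 'a \<Rightarrow> 'a \<Rightarrow> real" where
  "cut_value T d a = Sup (cut_set T d a)"

context
  fixes E :: "'a set" and T :: "'a \<Rightarrow> bool" and d :: 'a
  assumes cone: "unit_cone E T d"
begin

lemma unit_cone_sublattice_subgroup: "sublattice_subgroup E"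
  and unit_cone_unit_mem: "d \<in> E"
  and unit_cone_add: "T z \<Longrightarrow> T w \<Longrightarrow> T (z + w)"
  and unit_cone_nonneg: "0 \<le> z \<Longrightarrow> T z"
  and unit_cone_inf_zero: "T z \<Longrightarrow> T (inf z 0)"
  and unit_cone_not_uminus_unit: "\<not> T (- d)"
  and unit_cone_total: "a \<in> E \<Longrightarrow> T a \<or> T (- a)"
  and unit_cone_bounded: "a \<in> E \<Longrightarrow> \<exists>M. T (nmul M d - sup a (- a))"
  using cone by (simp_all add: unit_cone_def)

lemma unit_cone_mono: "T z \<Longrightarrow> z \<le> w \<Longrightarrow> T w"
  using unit_cone_add[of z "w - z"] unit_cone_nonneg[of "w - z"] by (simp add: add_diff_eq)

lemma unit_cone_nmul: "T z \<Longrightarrow> T (nmul n z)"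
  by (induct n) (simp_all add: unit_cone_nonneg unit_cone_add)

lemma unit_cone_unit: "T d"
  using unit_cone_total[OF unit_cone_unit_mem] unit_cone_not_uminus_unit by blast

lemma unit_cone_not_imul_neg:
  assumes "k < 0"
  shows "\<not> T (imul k d)"
proof
  assume Tk: "T (imul k d)"
  obtain n where k: "k = - int (Suc n)" using assms by (cases k rule: int_cases) auto
  have "imul k d = - d - nmul n d"
    by (simp only: k imul_uminus_left imul_of_nat nmul.simps minus_add_distrib diff_conv_add_uminus)
  then have "imul k d + nmul n d = - d" by simp
  moreover have "T (imul k d + nmul n d)"
    by (intro unit_cone_add Tk unit_cone_nmul unit_cone_unit)
  ultimately show False using unit_cone_not_uminus_unit by simp
qed

lemma cut_ratio_le:
  assumes q: "0 < q" "0 < q'"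
    and below: "T (nmul q' a - imul p' d)" and above: "T (imul p d - nmul q a)"
  shows "of_int p' / of_nat q' \<le> (of_int p / of_nat q :: real)"
proof -
  have "nmul q (nmul q' a - imul p' d) + nmul q' (imul p d - nmul q a)
      = (nmul (q * q') a - imul (int q * p') d) + (imul (int q' * p) d - nmul (q * q') a)"
    by (simp only: nmul_diff_right nmul_imul nmul_mult[symmetric] mult.commute[of q' q])
  also have "\<dots> = imul (int q' * p) d - imul (int q * p') d"
    by (simp add: algebra_simps)
  also have "\<dots> = imul (int q' * p - int q * p') d"
    by (simp only: imul_diff_left)
  moreover have "T (nmul q (nmul q' a - imul p' d) + nmul q' (imul p d - nmul q a))"
    by (intro unit_cone_add unit_cone_nmul below above)
  ultimately have "\<not> int q' * p - int q * p' < 0" using unit_cone_not_imul_neg by metis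
  then have "p' * int q \<le> p * int q'" by (simp add: algebra_simps)
  then have "real_of_int p' * real q \<le> real_of_int p * real q'"
    by (metis of_int_le_iff of_int_mult of_int_of_nat_eq)
  then show ?thesis using q by (simp add: field_simps)
qed

lemma unit_cone_bounds:
  assumes "a \<in> E"
  obtains M where "T (nmul 1 a - imul (- int M) d)" "T (imul (int M) d - nmul 1 a)"
proof -
  obtain M where M: "T (nmul M d - sup a (- a))" using unit_cone_bounded[OF assms] by blast
  have "- sup a (- a) \<le> a" by (simp add: minus_le_iff)
  then have "nmul M d - sup a (- a) \<le> a + nmul M d"
    by (metis add.commute add_left_mono diff_conv_add_uminus)
  moreover have "nmul M d - sup a (- a) \<le> nmul M d - a"
    by (intro diff_left_mono sup_ge1)
  ultimately have "T (a + nmul M d)" "T (nmul M d - a)" by (simp_all add: unit_cone_mono[OF M])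
  then show ?thesis by (intro that[of M]) (simp_all add: imul_uminus_left)
qed

lemma cut_set_le:
  assumes "r \<in> cut_set T d a" "0 < q" "T (imul p d - nmul q a)"
  shows "r \<le> of_int p / of_nat q"
proof -
  obtain p' q' where "r = of_int p' / of_nat q'" "0 < q'" "T (nmul q' a - imul p' d)"
    using assms(1) by (auto simp: cut_set_def)
  then show ?thesis using cut_ratio_le assms(2,3) by blast
qed

lemma cut_set_nonempty: "a \<in> E \<Longrightarrow> cut_set T d a \<noteq> {}"
  and bdd_above_cut_set: "a \<in> E \<Longrightarrow> bdd_above (cut_set T d a)"
proof -
  assume "a \<in> E"
  then obtain M where M: "T (nmul 1 a - imul (- int M) d)" "T (imul (int M) d - nmul 1 a)"
    by (rule unit_cone_bounds)
  have "of_int (- int M) / of_nat 1 \<in> cut_set T d a"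
    unfolding cut_set_def using M(1) by blast
  then show "cut_set T d a \<noteq> {}" by blast
  have "r \<le> real M" if "r \<in> cut_set T d a" for r
    using cut_set_le[OF that _ M(2)] by simp
  then show "bdd_above (cut_set T d a)" by (rule Conditionally_Complete_Lattices.bdd_aboveI)
qed

lemma cut_value_ge:
  assumes "a \<in> E" "0 < q" "T (nmul q a - imul p d)"
  shows "of_int p / of_nat q \<le> cut_value T d a"
proof -
  have "of_int p / of_nat q \<in> cut_set T d a" using assms(2,3) by (auto simp: cut_set_def)
  then show ?thesis unfolding cut_value_def by (rule cSup_upper[OF _ bdd_above_cut_set[OF assms(1)]])
qed

lemma cut_value_le:
  assumes "a \<in> E" "0 < q" "T (imul p d - nmul q a)"
  shows "cut_value T d a \<le> of_int p / of_nat q"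
  unfolding cut_value_def
  by (rule cSup_least[OF cut_set_nonempty[OF assms(1)]]) (rule cut_set_le[OF _ assms(2,3)])

lemma cut_value_nonneg: "a \<in> E \<Longrightarrow> T a \<Longrightarrow> 0 \<le> cut_value T d a"
  using cut_value_ge[of a 1 0] by simp

lemma cut_value_nonpos: "a \<in> E \<Longrightarrow> T (- a) \<Longrightarrow> cut_value T d a \<le> 0"
  using cut_value_le[of a 1 0] by simp

lemma cut_value_unit: "cut_value T d d = 1"
  using cut_value_ge[of d 1 1] cut_value_le[of d 1 1] unit_cone_unit_mem unit_cone_nonneg[of 0]
  by simp

lemma exists_cut_step:
  assumes a: "a \<in> E" and q: "0 < q"
  shows "\<exists>p. T (nmul q a - imul p d) \<and> T (imul (p + 1) d - nmul q a)"
proof -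
  define S where "S p \<longleftrightarrow> T (nmul q a - imul p d)" for p
  obtain M where M: "T (nmul 1 a - imul (- int M) d)" "T (imul (int M) d - nmul 1 a)"
    using unit_cone_bounds[OF a] .
  define p0 where "p0 = int q * (- int M)"
  have S0: "S p0"
    using unit_cone_nmul[OF M(1), of q] by (simp add: S_def p0_def nmul_diff_right nmul_imul)
  have not_S_big: "\<not> S (int q * int M + 1)"
  proof
    assume "S (int q * int M + 1)"
    then have "of_int (int q * int M + 1) / real q \<le> of_int (int M) / of_nat 1"
      unfolding S_def using q M(2) by (intro cut_ratio_le) simp_all
    moreover have "of_int (int q * int M + 1) / real q = real M + 1 / real q"
      using q by (simp add: field_simps)
    ultimately show False using q by simp
  qed
  have "\<exists>p. S p \<and> \<not> S (p + 1)"
  proof (rule ccontr)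
    assume "\<not> ?thesis"
    then have step: "S p \<Longrightarrow> S (p + 1)" for p by blast
    have "S (p0 + int k)" for k
    proof (induct k)
      case (Suc k)
      then show ?case using step[of "p0 + int k"] by (simp add: ac_simps)
    qed (simp add: S0)
    from this[of "nat (2 * int q * int M + 1)"] show False
      using not_S_big by (simp add: p0_def mult.commute)
  qed
  then obtain p where p: "S p" "\<not> S (p + 1)" by blast
  have "nmul q a - imul (p + 1) d \<in> E"
    using unit_cone_sublattice_subgroup a unit_cone_unit_mem by (simp add: sublattice_subgroup_closed)
  then have "T (- (nmul q a - imul (p + 1) d))" using unit_cone_total p(2) unfolding S_def by blast
  then show ?thesis using p(1) unfolding S_def by (auto simp: minus_diff_eq)
qed

lemma cut_value_add:
  assumes a: "a \<in> E" and b: "b \<in> E"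
  shows "cut_value T d (a + b) = cut_value T d a + cut_value T d b"
proof -
  let ?D = "cut_value T d (a + b) - cut_value T d a - cut_value T d b"
  have ab: "a + b \<in> E" using unit_cone_sublattice_subgroup a b by (rule sublattice_subgroup_add)
  have "\<bar>?D\<bar> \<le> 2 / real q" if q: "0 < q" for q
  proof -
    obtain pa where pa: "T (nmul q a - imul pa d)" "T (imul (pa + 1) d - nmul q a)"
      using exists_cut_step[OF a q] by blast
    obtain pb where pb: "T (nmul q b - imul pb d)" "T (imul (pb + 1) d - nmul q b)"
      using exists_cut_step[OF b q] by blast
    have "T ((nmul q a - imul pa d) + (nmul q b - imul pb d))"
      by (rule unit_cone_add[OF pa(1) pb(1)])
    then have lo: "T (nmul q (a + b) - imul (pa + pb) d)"
      by (simp add: nmul_add_right imul_add algebra_simps)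
    have "T ((imul (pa + 1) d - nmul q a) + (imul (pb + 1) d - nmul q b))"
      by (rule unit_cone_add[OF pa(2) pb(2)])
    then have hi: "T (imul ((pa + 1) + (pb + 1)) d - nmul q (a + b))"
      by (simp only: nmul_add_right imul_add) (simp add: algebra_simps)
    note bounds = cut_value_ge[OF a q pa(1)] cut_value_le[OF a q pa(2)]
      cut_value_ge[OF b q pb(1)] cut_value_le[OF b q pb(2)]
      cut_value_ge[OF ab q lo] cut_value_le[OF ab q hi]
    then show ?thesis using q by (simp add: field_simps abs_le_iff)
  qed
  then have "?D \<le> 0 + 2 / real (Suc m)" "- ?D \<le> 0 + 2 / real (Suc m)" for m
    by (smt (verit) zero_less_Suc)+
  then have "?D \<le> 0" "- ?D \<le> 0" by (blast intro: le_if_le_add_div_Suc)+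
  then show ?thesis by simp
qed

lemmas unit_cone_closed = sublattice_subgroup_closed[OF unit_cone_sublattice_subgroup]

lemma cut_value_zero: "cut_value T d 0 = 0"
  using cut_value_nonneg[of 0] cut_value_nonpos[of 0] unit_cone_nonneg[of 0]
  by (simp add: unit_cone_closed)

lemma cut_value_uminus: "a \<in> E \<Longrightarrow> cut_value T d (- a) = - cut_value T d a"
  using cut_value_add[of a "- a"] by (simp add: cut_value_zero unit_cone_closed)

lemma cut_value_diff: "a \<in> E \<Longrightarrow> b \<in> E \<Longrightarrow> cut_value T d (a - b) = cut_value T d a - cut_value T d b"
  using cut_value_add[of a "- b"] cut_value_uminus[of b] by (simp add: unit_cone_closed)

lemma cut_value_nmul: "a \<in> E \<Longrightarrow> cut_value T d (nmul n a) = real n * cut_value T d a"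
  by (induct n) (simp_all add: cut_value_zero cut_value_add unit_cone_closed algebra_simps)

lemma cut_value_mono: "a \<in> E \<Longrightarrow> b \<in> E \<Longrightarrow> a \<le> b \<Longrightarrow> cut_value T d a \<le> cut_value T d b"
  using cut_value_nonneg[of "b - a"] by (simp add: unit_cone_nonneg cut_value_diff unit_cone_closed)

lemma cut_value_pprt:
  assumes a: "a \<in> E"
  shows "cut_value T d (pprt a) = max (cut_value T d a) 0"
proof -
  have pa: "pprt a \<in> E" and na: "pprt (- a) \<in> E" using a by (simp_all add: unit_cone_closed)
  have "a = pprt a - pprt (- a)" by (simp add: pprt_neg prts[of a, symmetric])
  then have split: "cut_value T d a = cut_value T d (pprt a) - cut_value T d (pprt (- a))"
    using cut_value_diff[OF pa na] by simp
  have zero: "cut_value T d (pprt z) = 0" if "z \<in> E" "T (inf (- z) 0)" for z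
  proof -
    have "T (- pprt z)" using that(2) by (simp add: pprt_def neg_sup_eq_inf)
    then show ?thesis
      using that(1) cut_value_nonneg[of "pprt z"] cut_value_nonpos[of "pprt z"]
      by (simp add: unit_cone_nonneg unit_cone_closed)
  qed
  show ?thesis
  proof (cases "T a")
    case True
    then have "cut_value T d (pprt (- a)) = 0"
      using zero[of "- a"] a unit_cone_inf_zero by (simp add: unit_cone_closed)
    then show ?thesis using split cut_value_nonneg[OF a True] by simp
  next
    case False
    then have "T (- a)" using unit_cone_total[OF a] by blast
    then have "cut_value T d (pprt a) = 0" using zero[OF a] unit_cone_inf_zero by blast
    then show ?thesis using split cut_value_nonpos[OF a \<open>T (- a)\<close>] by simp
  qed
qed

lemma cut_value_sup:
  assumes a: "a \<in> E" and b: "b \<in> E"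
  shows "cut_value T d (sup a b) = max (cut_value T d a) (cut_value T d b)"
proof -
  have ba: "b - a \<in> E" using a b by (simp add: unit_cone_closed)
  have "sup a b = a + pprt (b - a)"
    unfolding pprt_def add_sup_distrib_left by (simp add: sup_commute add_diff_eq)
  then have "cut_value T d (sup a b) = cut_value T d a + max (cut_value T d (b - a)) 0"
    using cut_value_add[OF a] cut_value_pprt[OF ba] ba by (simp add: unit_cone_closed)
  then show ?thesis using cut_value_diff[OF b a] by simp
qed

lemma cut_value_inf:
  assumes a: "a \<in> E" and b: "b \<in> E"
  shows "cut_value T d (inf a b) = min (cut_value T d a) (cut_value T d b)"
proof -
  have "cut_value T d (inf a b) = - cut_value T d (sup (- a) (- b))"
    using a b by (simp only: inf_eq_neg_sup[of a b] cut_value_uminus unit_cone_closed)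
  then show ?thesis
    using a b by (simp add: cut_value_sup cut_value_uminus unit_cone_closed)
qed

lemma cut_value_partial_join_attained:
  assumes "g \<in> E" "\<And>i. f i \<in> E"
  shows "\<exists>i. cut_value T d (partial_join g f k) = cut_value T d (inf (f i) g)"
proof (induct k)
  case (Suc k)
  then obtain i where i: "cut_value T d (partial_join g f k) = cut_value T d (inf (f i) g)" ..
  have "partial_join g f k \<in> E"
    using assms by (intro sublattice_subgroup_partial_join[OF unit_cone_sublattice_subgroup])
  then have "cut_value T d (partial_join g f (Suc k))
      = max (cut_value T d (inf (f i) g)) (cut_value T d (inf (f (Suc k)) g))"
    using assms i by (simp add: cut_value_sup unit_cone_closed)
  then show ?case
    by (cases "cut_value T d (inf (f i) g) \<le> cut_value T d (inf (f (Suc k)) g)")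
      (auto simp: ord_class.max_def)
qed (rule exI[of _ "0::nat"], simp)

lemma cut_value_eq_SUP:
  assumes s: "s \<in> E" and u: "\<And>i. u i \<in> E" "\<And>i. u i \<le> s"
    and approx: "\<And>m. \<exists>i. T (d - nmul (Suc m) (s - u i))"
  shows "cut_value T d s = (SUP i. cut_value T d (u i))"
proof -
  have bdd: "bdd_above (range (\<lambda>i. cut_value T d (u i)))"
    by (rule Conditionally_Complete_Lattices.bdd_aboveI2[of _ _ "cut_value T d s"])
      (rule cut_value_mono[OF u(1) s u(2)])
  have "(SUP i. cut_value T d (u i)) \<le> cut_value T d s"
    using cut_value_mono[OF u(1) s u(2)] by (simp add: cSUP_least)
  moreover have "cut_value T d s \<le> (SUP i. cut_value T d (u i))"
  proof (rule le_if_le_add_div_Suc)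
    fix m
    obtain i where i: "T (d - nmul (Suc m) (s - u i))" using approx by blast
    have "0 \<le> cut_value T d (d - nmul (Suc m) (s - u i))"
      using s u i unit_cone_unit_mem by (intro cut_value_nonneg) (simp_all add: unit_cone_closed)
    also have "\<dots> = 1 - real (Suc m) * (cut_value T d s - cut_value T d (u i))"
      using s u unit_cone_unit_mem
      by (simp add: cut_value_diff cut_value_nmul cut_value_unit unit_cone_closed del: nmul.simps)
    finally have "cut_value T d s - cut_value T d (u i) \<le> 1 / real (Suc m)"
      by (simp add: field_simps)
    moreover have "cut_value T d (u i) \<le> (SUP i. cut_value T d (u i))"
      by (rule cSUP_upper[OF UNIV_I bdd])
    ultimately show "cut_value T d s \<le> (SUP i. cut_value T d (u i)) + 1 / real (Suc m)"
      by linarith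
  qed
  ultimately show ?thesis by linarith
qed

end

end

section \<open>Separating maps into the reals\<close>

lemma (in lattice_ab_group_add) unit_cone_chain_cone:
  assumes "sublattice_subgroup E" "d \<in> E"
    and "\<And>j. ch (Suc j) \<le> ch j" "\<And>j. pos_below d (ch j)"
    and "\<And>a. a \<in> E \<Longrightarrow> chain_cone ch a \<or> chain_cone ch (- a)"
    and "\<And>a. a \<in> E \<Longrightarrow> \<exists>M. chain_cone ch (nmul M d - sup a (- a))"
  shows "unit_cone E (chain_cone ch) d"
  using assms chain_cone_add[of ch d] chain_cone_nonneg[of ch d] not_chain_cone_uminus[of ch d]
  by (simp add: unit_cone_def chain_cone_inf_zero)

context lattice_ab_group_add
begin

definition lgroup_step :: "'a set \<Rightarrow> 'a set" where
  "lgroup_step S = S \<union> {0} \<union> uminus ` S \<union> (\<lambda>(a, b). a + b) ` (S \<times> S)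
     \<union> (\<lambda>(a, b). sup a b) ` (S \<times> S) \<union> (\<lambda>(a, b). inf a b) ` (S \<times> S)"

definition lgroup_closure :: "'a set \<Rightarrow> 'a set" where
  "lgroup_closure B = (\<Union>k. (lgroup_step ^^ k) B)"

lemma countable_lgroup_closure: "countable B \<Longrightarrow> countable (lgroup_closure B)"
proof -
  assume B: "countable B"
  have "countable ((lgroup_step ^^ k) B)" for k
    by (induct k) (simp_all add: B lgroup_step_def)
  then show ?thesis by (simp add: lgroup_closure_def)
qed

lemma subset_lgroup_closure: "B \<subseteq> lgroup_closure B"
  unfolding lgroup_closure_def by (metis UN_upper UNIV_I funpow_0)

lemma lgroup_step_stages_mono: "i \<le> j \<Longrightarrow> (lgroup_step ^^ i) B \<subseteq> (lgroup_step ^^ j) B"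
  by (induct j rule: dec_induct) (auto simp: lgroup_step_def)

lemma sublattice_subgroup_lgroup_closure: "sublattice_subgroup (lgroup_closure B)"
proof -
  have next_stage: "lgroup_step ((lgroup_step ^^ k) B) \<subseteq> lgroup_closure B" for k
    unfolding lgroup_closure_def by (metis UN_upper UNIV_I funpow.simps(2) o_apply)
  have common_stage: "\<exists>k. a \<in> (lgroup_step ^^ k) B \<and> b \<in> (lgroup_step ^^ k) B"
    if a: "a \<in> lgroup_closure B" and b: "b \<in> lgroup_closure B" for a b
  proof -
    obtain i where "a \<in> (lgroup_step ^^ i) B" using a by (auto simp: lgroup_closure_def)
    moreover obtain j where "b \<in> (lgroup_step ^^ j) B" using b by (auto simp: lgroup_closure_def)
    ultimately show ?thesis
      using lgroup_step_stages_mono[of i "max i j" B] lgroup_step_stages_mono[of j "max i j" B]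
      by auto
  qed
  show ?thesis
    unfolding sublattice_subgroup_def
  proof (intro conjI ballI)
    show "0 \<in> lgroup_closure B" using next_stage[of 0] by (auto simp: lgroup_step_def)
  next
    fix a assume "a \<in> lgroup_closure B"
    then obtain k where "a \<in> (lgroup_step ^^ k) B" by (auto simp: lgroup_closure_def)
    then show "- a \<in> lgroup_closure B" using next_stage[of k] by (auto simp: lgroup_step_def)
  next
    fix a b assume "a \<in> lgroup_closure B" "b \<in> lgroup_closure B"
    then obtain k where "a \<in> (lgroup_step ^^ k) B" "b \<in> (lgroup_step ^^ k) B"
      using common_stage by blast
    then show "a + b \<in> lgroup_closure B" "sup a b \<in> lgroup_closure B"
      "inf a b \<in> lgroup_closure B"
      using next_stage[of k] by (auto simp: lgroup_step_def)
  qed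
qed

end

text \<open>The congruence on the power of \<open>\<real>\<close> only ever has to account for countably many
  instances of the operations at a time, so real-valued maps are only asked to preserve those.\<close>

datatype 'a op_instance =
  Inst_zero | Inst_plus 'a 'a | Inst_uminus 'a | Inst_sup 'a 'a | Inst_inf 'a 'a
  | Inst_bjoin 'a "nat \<Rightarrow> 'a"

context sigma_lattice_ab_group
begin

fun preserves_instance :: "('a \<Rightarrow> real) \<Rightarrow> 'a op_instance \<Rightarrow> bool" where
  "preserves_instance \<phi> Inst_zero \<longleftrightarrow> \<phi> 0 = 0"
| "preserves_instance \<phi> (Inst_plus a b) \<longleftrightarrow> \<phi> (a + b) = \<phi> a + \<phi> b"
| "preserves_instance \<phi> (Inst_uminus a) \<longleftrightarrow> \<phi> (- a) = - \<phi> a"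
| "preserves_instance \<phi> (Inst_sup a b) \<longleftrightarrow> \<phi> (sup a b) = max (\<phi> a) (\<phi> b)"
| "preserves_instance \<phi> (Inst_inf a b) \<longleftrightarrow> \<phi> (inf a b) = min (\<phi> a) (\<phi> b)"
| "preserves_instance \<phi> (Inst_bjoin g f) \<longleftrightarrow> \<phi> (bjoin g f) = (SUP n. min (\<phi> (f n)) (\<phi> g))"

fun instance_args :: "'a op_instance \<Rightarrow> 'a set" where
  "instance_args Inst_zero = {}"
| "instance_args (Inst_plus a b) = {a, b}"
| "instance_args (Inst_uminus a) = {a}"
| "instance_args (Inst_sup a b) = {a, b}"
| "instance_args (Inst_inf a b) = {a, b}"
| "instance_args (Inst_bjoin g f) = insert (bjoin g f) (insert g (range f))"

lemma countable_instance_args: "countable (instance_args \<iota>)"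
  by (cases \<iota>) auto

lemma cut_value_bjoin:
  assumes cone: "unit_cone E T d"
    and mem: "g \<in> E" "\<And>n. f n \<in> E" "bjoin g f \<in> E"
    and approx: "\<And>m. \<exists>k. T (d - nmul (Suc m) (bjoin g f - partial_join g f k))"
  shows "cut_value T d (bjoin g f) = (SUP n. min (cut_value T d (f n)) (cut_value T d g))"
proof -
  let ?\<chi> = "cut_value T d"
  have pj: "partial_join g f k \<in> E" for k
    using mem by (intro sublattice_subgroup_partial_join[OF unit_cone_sublattice_subgroup[OF cone]])
  have fg: "inf (f n) g \<in> E" for n
    using mem by (simp add: unit_cone_closed[OF cone])
  have "?\<chi> (bjoin g f) = (SUP k. ?\<chi> (partial_join g f k))"
    using mem pj approx by (intro cut_value_eq_SUP[OF cone] partial_join_le_bjoin)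
  moreover have "(SUP k. ?\<chi> (partial_join g f k)) \<le> (SUP n. ?\<chi> (inf (f n) g))"
  proof (rule cSUP_mono)
    show "bdd_above (range (\<lambda>n. ?\<chi> (inf (f n) g)))"
      using mem fg by (intro Conditionally_Complete_Lattices.bdd_aboveI2[of _ _ "?\<chi> g"])
        (simp add: cut_value_mono[OF cone])
    show "\<exists>n\<in>UNIV. ?\<chi> (partial_join g f k) \<le> ?\<chi> (inf (f n) g)" for k
    proof -
      have "\<exists>n. ?\<chi> (partial_join g f k) = ?\<chi> (inf (f n) g)"
        by (rule cut_value_partial_join_attained[OF cone mem(1)]) (rule mem(2))
      then obtain n where "?\<chi> (partial_join g f k) = ?\<chi> (inf (f n) g)" ..
      then show ?thesis by (intro bexI[of _ n]) simp_all
    qed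
  qed simp
  moreover have "(SUP n. ?\<chi> (inf (f n) g)) \<le> (SUP k. ?\<chi> (partial_join g f k))"
  proof (rule cSUP_mono)
    show "bdd_above (range (\<lambda>k. ?\<chi> (partial_join g f k)))"
      using mem pj by (intro Conditionally_Complete_Lattices.bdd_aboveI2[of _ _ "?\<chi> (bjoin g f)"])
        (simp add: cut_value_mono[OF cone] partial_join_le_bjoin)
    show "\<exists>k\<in>UNIV. ?\<chi> (inf (f n) g) \<le> ?\<chi> (partial_join g f k)" for n
      by (intro bexI[of _ n] cut_value_mono[OF cone] fg pj inf_le_partial_join) simp
  qed simp
  ultimately show ?thesis
    using mem by (simp add: cut_value_inf[OF cone])
qed

definition instance_defect :: "'a op_instance \<Rightarrow> nat \<Rightarrow> 'a" where
  "instance_defect \<iota> k = (case \<iota> of Inst_bjoin g f \<Rightarrow> bjoin g f - partial_join g f k | _ \<Rightarrow> 0)"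

lemma instance_defect_nonneg: "0 \<le> instance_defect \<iota> k"
  by (cases \<iota>) (simp_all add: instance_defect_def partial_join_le_bjoin)

lemma instance_defect_not_ge:
  assumes "0 \<le> c" "c \<noteq> 0"
  shows "\<exists>k. \<not> c \<le> nmul (Suc m) (instance_defect \<iota> k)"
proof (rule ccontr)
  assume "\<not> ?thesis"
  then have "c \<le> 0"
    by (cases \<iota>) (auto simp: instance_defect_def simp del: nmul.simps
        intro: bjoin_defect_multiples_imp_nonpos)
  then show False using assms order.antisym[of c 0] by simp
qed

lemma preserves_instance_cut_value:
  assumes cone: "unit_cone E T d" and args: "instance_args \<iota> \<subseteq> E"
    and approx: "\<And>m. \<exists>k. T (d - nmul (Suc m) (instance_defect \<iota> k))"
  shows "preserves_instance (cut_value T d) \<iota>"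
proof (cases \<iota>)
  case (Inst_bjoin g f)
  have "\<exists>k. T (d - nmul (Suc m) (bjoin g f - partial_join g f k))" for m
    using approx[of m] by (simp add: instance_defect_def Inst_bjoin del: nmul.simps)
  moreover have "g \<in> E" "\<And>n. f n \<in> E" "bjoin g f \<in> E" using args by (auto simp: Inst_bjoin)
  ultimately show ?thesis using cut_value_bjoin[OF cone] by (simp add: Inst_bjoin)
next
  case Inst_zero
  then show ?thesis by (simp add: cut_value_zero[OF cone])
next
  case (Inst_plus a b)
  then show ?thesis using args by (simp add: cut_value_add[OF cone])
next
  case (Inst_uminus a)
  then show ?thesis using args by (simp add: cut_value_uminus[OF cone])
next
  case (Inst_sup a b)
  then show ?thesis using args by (simp add: cut_value_sup[OF cone])
next
  case (Inst_inf a b)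
  then show ?thesis using args by (simp add: cut_value_inf[OF cone])
qed

lemma pos_below_refine:
  fixes D :: "nat \<Rightarrow> 'a"
  assumes c: "pos_below d c"
    and D: "\<And>k. 0 \<le> D k" "\<And>c. pos_below d c \<Longrightarrow> \<exists>k. \<not> c \<le> nmul (Suc m) (D k)"
  shows "\<exists>c'. pos_below d c' \<and> c' \<le> c \<and> (inf c' (pprt (- a)) = 0 \<or> inf c' (pprt a) = 0) \<and>
    (\<exists>M. inf c' (pprt (sup a (- a) - nmul M d)) = 0) \<and> (\<exists>k. inf c' (pprt (nmul (Suc m) (D k) - d)) = 0)"
proof -
  have down: "inf c' (pprt y) = 0" if "inf c (pprt y) = 0" "pos_below d c'" "c' \<le> c" for c c' y
    using that inf_eq_zero_antimono[of c' "pprt y" c "pprt y"] by (simp add: pos_below_def)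
  obtain c1 where c1: "pos_below d c1" "c1 \<le> c" "inf c1 (pprt (- a)) = 0 \<or> inf c1 (pprt a) = 0"
    using pos_below_refine_sign[OF c] by blast
  obtain c2 M where c2: "pos_below d c2" "c2 \<le> c1" "inf c2 (pprt (sup a (- a) - nmul M d)) = 0"
    using pos_below_refine_bound[OF c1(1) sup_uminus_nonneg] by blast
  obtain k where "\<not> c2 \<le> nmul (Suc m) (D k)" using D(2)[OF c2(1)] by blast
  then obtain c3 where c3: "pos_below d c3" "c3 \<le> c2" "inf c3 (pprt (nmul (Suc m) (D k) - d)) = 0"
    using pos_below_refine_exceed[OF c2(1) nmul_nonneg[OF D(1)]] by blast
  have c31: "c3 \<le> c1" using c3(2) c2(2) by (rule order.trans)
  have "inf c3 (pprt (- a)) = 0 \<or> inf c3 (pprt a) = 0"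
    using c1(3) down[OF _ c3(1) c31, of "- a"] down[OF _ c3(1) c31, of a] by blast
  moreover have "inf c3 (pprt (sup a (- a) - nmul M d)) = 0"
    by (rule down[OF c2(3) c3(1,2)])
  moreover have "c3 \<le> c" using c31 c1(2) by (rule order.trans)
  ultimately show ?thesis using c3(1,3) by (intro exI[of _ c3]) blast
qed

lemma exists_deciding_chain:
  fixes D :: "nat \<Rightarrow> nat \<Rightarrow> 'a"
  assumes E: "countable E" "E \<noteq> {}" and d: "0 \<le> d" "d \<noteq> 0"
    and D: "\<And>n k. 0 \<le> D n k" "\<And>n m c. pos_below d c \<Longrightarrow> \<exists>k. \<not> c \<le> nmul (Suc m) (D n k)"
  obtains ch :: "nat \<Rightarrow> 'a"
  where "\<And>j. ch (Suc j) \<le> ch j" "\<And>j. pos_below d (ch j)"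
    "\<And>a. a \<in> E \<Longrightarrow> chain_cone ch a \<or> chain_cone ch (- a)"
    "\<And>a. a \<in> E \<Longrightarrow> \<exists>M. chain_cone ch (nmul M d - sup a (- a))"
    "\<And>n m. \<exists>k. chain_cone ch (d - nmul (Suc m) (D n k))"
proof -
  \<comment> \<open>step \<open>j\<close> decides the element \<open>en j\<close> and the \<open>m\<close>-th approximation of the \<open>n\<close>-th defect,
    where \<open>(n, m)\<close> is the \<open>j\<close>-th pair\<close>
  define en where "en = from_nat_into E"
  define Q where "Q j c \<longleftrightarrow> (inf c (pprt (- en j)) = 0 \<or> inf c (pprt (en j)) = 0) \<and>
    (\<exists>M. inf c (pprt (sup (en j) (- en j) - nmul M d)) = 0) \<and>
    (\<exists>k. inf c (pprt (nmul (Suc (snd (prod_decode j))) (D (fst (prod_decode j)) k) - d)) = 0)"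
    for j c
  have "\<exists>ch. \<forall>j. pos_below d (ch j) \<and> (ch (Suc j) \<le> ch j \<and> Q j (ch (Suc j)))"
  proof (rule dependent_nat_choice)
    show "\<exists>c. pos_below d c" using d by (auto simp: pos_below_def)
    show "\<exists>c'. pos_below d c' \<and> c' \<le> c \<and> Q j c'" if "pos_below d c" for c j
      using pos_below_refine[OF that D(1) D(2)] unfolding Q_def by blast
  qed
  then obtain ch where ch: "\<And>j. pos_below d (ch j)" "\<And>j. ch (Suc j) \<le> ch j"
    and Q: "\<And>j. Q j (ch (Suc j))" by blast
  show ?thesis
  proof (rule that[of ch])
    show "ch (Suc j) \<le> ch j" "pos_below d (ch j)" for j by (fact ch(2), fact ch(1))
  next
    fix a assume "a \<in> E"
    then obtain j where j: "a = en j"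
      unfolding en_def by (metis from_nat_into_surj[OF E(1)])
    show "chain_cone ch a \<or> chain_cone ch (- a)"
      using Q[of j] unfolding Q_def chain_cone_def j by auto
    show "\<exists>M. chain_cone ch (nmul M d - sup a (- a))"
      using Q[of j] unfolding Q_def chain_cone_def j by (auto simp: minus_diff_eq)
  next
    fix n m
    have "prod_decode (prod_encode (n, m)) = (n, m)" by simp
    then show "\<exists>k. chain_cone ch (d - nmul (Suc m) (D n k))"
      using Q[of "prod_encode (n, m)"] unfolding Q_def chain_cone_def
      by (auto simp: minus_diff_eq)
  qed
qed

lemma exists_separating_map:
  fixes F :: "nat \<Rightarrow> 'a op_instance"
  assumes "x \<noteq> y"
  shows "\<exists>\<phi>. \<phi> x \<noteq> \<phi> y \<and> (\<forall>n. preserves_instance \<phi> (F n))"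
proof -
  define E where "E = lgroup_closure ({x, y} \<union> (\<Union>n. instance_args (F n)))"
  have E: "sublattice_subgroup E" "countable E"
    by (simp_all add: E_def sublattice_subgroup_lgroup_closure countable_lgroup_closure
        countable_instance_args)
  have "{x, y} \<union> (\<Union>n. instance_args (F n)) \<subseteq> E"
    unfolding E_def by (rule subset_lgroup_closure)
  then have xE: "x \<in> E" and yE: "y \<in> E" and args: "\<And>n. instance_args (F n) \<subseteq> E"
    by auto
  define d where "d = sup (x - y) (y - x)"
  have dE: "d \<in> E" using xE yE E(1) by (simp add: d_def sublattice_subgroup_closed)
  have d0: "0 \<le> d" using sup_uminus_nonneg[of "x - y"] by (simp add: d_def)
  have "d \<noteq> 0"
  proof
    assume "d = 0"
    then have "x - y \<le> 0" "y - x \<le> 0"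
      using sup_ge1[of "x - y" "y - x"] sup_ge2[of "y - x" "x - y"] by (simp_all add: d_def)
    then show False using assms by simp
  qed
  have defect_small: "\<exists>k. \<not> c \<le> nmul (Suc m) (instance_defect (F n) k)"
    if "pos_below d c" for n m c
    using that instance_defect_not_ge by (simp add: pos_below_def)
  obtain ch where ch: "\<And>j. ch (Suc j) \<le> ch j" "\<And>j. pos_below d (ch j)"
    "\<And>a. a \<in> E \<Longrightarrow> chain_cone ch a \<or> chain_cone ch (- a)"
    "\<And>a. a \<in> E \<Longrightarrow> \<exists>M. chain_cone ch (nmul M d - sup a (- a))"
    and approx: "\<And>n m. \<exists>k. chain_cone ch (d - nmul (Suc m) (instance_defect (F n) k))"
    using exists_deciding_chain[where D = "\<lambda>n. instance_defect (F n)", OF E(2) _ d0 \<open>d \<noteq> 0\<close>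
        instance_defect_nonneg defect_small] xE
    by blast
  have cone: "unit_cone E (chain_cone ch) d"
    using E(1) dE ch by (rule unit_cone_chain_cone)
  define \<phi> where "\<phi> = cut_value (chain_cone ch) d"
  have xy: "x - y \<in> E" "y - x \<in> E" using xE yE E(1) by (simp_all add: sublattice_subgroup_diff)
  have "1 = \<phi> (sup (x - y) (y - x))"
    using cut_value_unit[OF cone] by (simp add: \<phi>_def d_def[symmetric])
  also have "\<dots> = max (\<phi> x - \<phi> y) (\<phi> y - \<phi> x)"
    by (simp add: \<phi>_def cut_value_sup[OF cone xy] cut_value_diff[OF cone xE yE]
        cut_value_diff[OF cone yE xE])
  finally have "\<phi> x \<noteq> \<phi> y" by auto
  moreover have "preserves_instance \<phi> (F n)" for n
    unfolding \<phi>_def using cone args approx by (rule preserves_instance_cut_value)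
  ultimately show ?thesis by blast
qed

end

lemma lattice_ab_group_add_if_lgroup_axioms:
  fixes G :: "'a sl_alg"
  assumes "lgroup_axioms G"
  shows "class.lattice_ab_group_add (splus G) (szero G) (\<lambda>x y. splus G x (sneg G y)) (sneg G)
    (\<lambda>x y. smeet G x y = x) (\<lambda>x y. smeet G x y = x \<and> smeet G y x \<noteq> y) (smeet G) (sjoin G)"
proof -
  have ax:
    "splus G (splus G x y) z = splus G x (splus G y z)"
    "splus G x y = splus G y x"
    "splus G (szero G) x = x"
    "splus G (sneg G x) x = szero G"
    "sjoin G (sjoin G x y) z = sjoin G x (sjoin G y z)"
    "smeet G (smeet G x y) z = smeet G x (smeet G y z)"
    "sjoin G x y = sjoin G y x"
    "smeet G x y = smeet G y x"
    "sjoin G x (smeet G x y) = x"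
    "smeet G x (sjoin G x y) = x"
    "splus G x (smeet G y z) = smeet G (splus G x y) (splus G x z)"
    for x y z
    using assms unfolding lgroup_axioms_def by fast+
  have meet_idem: "smeet G x x = x" for x using ax(9,10) by metis
  have join_iff_meet: "sjoin G y x = x \<longleftrightarrow> smeet G y x = y" for x y
    using ax(7-10) by metis
  show ?thesis
  proof unfold_locales
    fix x y z
    assume "smeet G x y = x" "smeet G x z = x"
    then show "smeet G x (smeet G y z) = x" by (metis ax(6))
  next
    fix x y z
    assume "smeet G y x = y" "smeet G z x = z"
    then show "smeet G (sjoin G y z) x = sjoin G y z"
      using join_iff_meet by (metis ax(5))
  next
    fix a b c
    assume "smeet G a b = a"
    then show "smeet G (splus G c a) (splus G c b) = splus G c a" by (metis ax(11))
  qed (use ax meet_idem in \<open>metis+\<close>)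
qed

lemma sigma_lattice_ab_group_if_in_V_slG:
  fixes G :: "'a sl_alg"
  assumes V: "in_V_slG G"
  shows "class.sigma_lattice_ab_group (splus G) (szero G) (\<lambda>x y. splus G x (sneg G y)) (sneg G)
    (\<lambda>x y. smeet G x y = x) (\<lambda>x y. smeet G x y = x \<and> smeet G y x \<noteq> y) (smeet G) (sjoin G) (sbv G)"
proof -
  have LG: "class.lattice_ab_group_add (splus G) (szero G) (\<lambda>x y. splus G x (sneg G y)) (sneg G)
    (\<lambda>x y. smeet G x y = x) (\<lambda>x y. smeet G x y = x \<and> smeet G y x \<noteq> y) (smeet G) (sjoin G)"
    using V unfolding in_V_slG_def by (intro lattice_ab_group_add_if_lgroup_axioms) blast
  interpret L: lattice_ab_group_add "splus G" "szero G" "\<lambda>x y. splus G x (sneg G y)" "sneg G"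
    "\<lambda>x y. smeet G x y = x" "\<lambda>x y. smeet G x y = x \<and> smeet G y x \<noteq> y" "smeet G" "sjoin G"
    by (rule LG)
  have A1: "sbv G g f = sbv G g (\<lambda>n. smeet G (f n) g)"
    and A2: "sbv G g f = sjoin G (smeet G (f 0) g) (sbv G g (\<lambda>n. f (Suc n)))"
    and A3: "smeet G (sbv G g (\<lambda>n. smeet G (f n) h)) h = sbv G g (\<lambda>n. smeet G (f n) h)"
    for g h f
    using V unfolding in_V_slG_def sle_def by blast+
  have upper: "smeet G (smeet G (f n) g) (sbv G g f) = smeet G (f n) g" for f n g
  proof (induct n arbitrary: f)
    case 0
    show ?case by (subst A2) (rule L.sup_ge1)
  next
    case (Suc n)
    have "smeet G (smeet G (f (Suc n)) g) (sbv G g (\<lambda>n. f (Suc n))) = smeet G (f (Suc n)) g"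
      using Suc[of "\<lambda>n. f (Suc n)"] by simp
    moreover have "smeet G (sbv G g (\<lambda>n. f (Suc n))) (sbv G g f) = sbv G g (\<lambda>n. f (Suc n))"
      by (subst (2) A2) (rule L.sup_ge2)
    ultimately show ?case by (rule L.order_trans)
  qed
  \<comment> \<open>(A1) moves the meet with \<open>g\<close> inside, so that (A3) applies with \<open>h\<close>\<close>
  have least: "smeet G (sbv G g f) h = sbv G g f"
    if "\<And>n. smeet G (smeet G (f n) g) h = smeet G (f n) g" for f g h
  proof -
    define f' where "f' = (\<lambda>n. smeet G (f n) g)"
    have "(\<lambda>n. smeet G (f' n) h) = f'" unfolding f'_def using that by simp
    then have "smeet G (sbv G g f') h = sbv G g f'" using A3[of g f' h] by simp
    then show ?thesis using A1[of g f] by (simp add: f'_def)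
  qed
  show ?thesis
    unfolding class.sigma_lattice_ab_group_def class.sigma_lattice_ab_group_axioms_def
    using LG upper least by blast
qed

section \<open>Identifying functions off countably many bad sets\<close>

definition countably_covered :: "('b \<Rightarrow> 'i set) \<Rightarrow> 'i set \<Rightarrow> bool" where
  "countably_covered bad A \<longleftrightarrow> (\<exists>F :: nat \<Rightarrow> 'b. A \<subseteq> (\<Union>n. bad (F n)))"

definition ae_eq :: "('b \<Rightarrow> 'i set) \<Rightarrow> ('i \<Rightarrow> 'c) \<Rightarrow> ('i \<Rightarrow> 'c) \<Rightarrow> bool" where
  "ae_eq bad u v \<longleftrightarrow> countably_covered bad {i. u i \<noteq> v i}"

lemma countably_covered_subset: "A \<subseteq> bad b \<Longrightarrow> countably_covered bad A"
  unfolding countably_covered_def by (rule exI[of _ "\<lambda>_. b"]) blast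

lemma countably_covered_mono: "A \<subseteq> B \<Longrightarrow> countably_covered bad B \<Longrightarrow> countably_covered bad A"
  unfolding countably_covered_def by blast

lemma countably_covered_UN:
  fixes bad :: "'b \<Rightarrow> 'i set"
  assumes "\<And>n :: nat. countably_covered bad (A n)"
  shows "countably_covered bad (\<Union>n. A n)"
proof -
  define F where "F n = (SOME F :: nat \<Rightarrow> 'b. A n \<subseteq> (\<Union>k. bad (F k)))" for n
  have F: "A n \<subseteq> (\<Union>k. bad (F n k))" for n
  proof -
    have "\<exists>F :: nat \<Rightarrow> 'b. A n \<subseteq> (\<Union>k. bad (F k))"
      using assms[of n] by (simp add: countably_covered_def)
    from someI_ex[OF this] show ?thesis by (simp add: F_def)
  qed
  have cover: "(\<Union>n. A n) \<subseteq> (\<Union>j. bad (case_prod F (prod_decode j)))"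
  proof
    fix i
    assume "i \<in> (\<Union>n. A n)"
    then obtain n where "i \<in> A n" by blast
    then obtain k where "i \<in> bad (F n k)" using F by blast
    then show "i \<in> (\<Union>j. bad (case_prod F (prod_decode j)))"
      by (intro UN_I[of "prod_encode (n, k)"]) simp_all
  qed
  show ?thesis
    unfolding countably_covered_def
    by (rule exI[of _ "\<lambda>j. case_prod F (prod_decode j)"]) (fact cover)
qed

lemma countably_covered_Un:
  assumes "countably_covered bad A" "countably_covered bad B"
  shows "countably_covered bad (A \<union> B)"
proof -
  let ?C = "\<lambda>n :: nat. if n = 0 then A else B"
  have "countably_covered bad (\<Union>n. ?C n)" by (rule countably_covered_UN) (simp add: assms)
  moreover have "A \<union> B \<subseteq> (\<Union>n. ?C n)"
    using UN_upper[OF UNIV_I, of ?C 0] UN_upper[OF UNIV_I, of ?C 1] by auto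
  ultimately show ?thesis by (rule countably_covered_mono[rotated])
qed

lemma ae_eq_if_subset: "{i. u i \<noteq> v i} \<subseteq> A \<Longrightarrow> countably_covered bad A \<Longrightarrow> ae_eq bad u v"
  unfolding ae_eq_def by (rule countably_covered_mono)

lemma equivp_ae_eq: "equivp (ae_eq bad)"
proof (rule equivpI)
  show "reflp (ae_eq bad)"
    by (simp add: reflp_def ae_eq_def countably_covered_subset)
  show "symp (ae_eq bad)"
    by (simp add: symp_def ae_eq_def eq_commute)
  show "transp (ae_eq bad)"
  proof (rule transpI)
    fix u v w
    assume "ae_eq bad u v" "ae_eq bad v w"
    then have "countably_covered bad ({i. u i \<noteq> v i} \<union> {i. v i \<noteq> w i})"
      unfolding ae_eq_def by (rule countably_covered_Un)
    then show "ae_eq bad u w" by (rule ae_eq_if_subset[rotated]) auto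
  qed
qed

lemma congruence_power_ae_eq:
  fixes bad :: "'b \<Rightarrow> 'i set"
  shows "congruence power_alg (ae_eq bad)"
  unfolding congruence_def
proof (intro conjI allI impI)
  show "equivp (ae_eq bad)" by (rule equivp_ae_eq)
next
  fix x x' y y' :: "'i \<Rightarrow> real"
  assume "ae_eq bad x x' \<and> ae_eq bad y y'"
  then have "countably_covered bad ({i. x i \<noteq> x' i} \<union> {i. y i \<noteq> y' i})"
    unfolding ae_eq_def by (intro countably_covered_Un) auto
  then show "ae_eq bad (splus power_alg x y) (splus power_alg x' y')"
    and "ae_eq bad (sjoin power_alg x y) (sjoin power_alg x' y')"
    and "ae_eq bad (smeet power_alg x y) (smeet power_alg x' y')"
    by (rule ae_eq_if_subset[rotated], auto simp: power_alg_def)+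
next
  fix x x' :: "'i \<Rightarrow> real"
  assume "ae_eq bad x x'"
  then show "ae_eq bad (sneg power_alg x) (sneg power_alg x')"
    unfolding ae_eq_def by (rule countably_covered_mono[rotated]) (auto simp: power_alg_def)
next
  fix g g' :: "'i \<Rightarrow> real" and f f' :: "nat \<Rightarrow> 'i \<Rightarrow> real"
  assume "ae_eq bad g g' \<and> (\<forall>n. ae_eq bad (f n) (f' n))"
  then have "countably_covered bad ({i. g i \<noteq> g' i} \<union> (\<Union>n. {i. f n i \<noteq> f' n i}))"
    unfolding ae_eq_def by (intro countably_covered_Un countably_covered_UN) auto
  then show "ae_eq bad (sbv power_alg g f) (sbv power_alg g' f')"
    by (rule ae_eq_if_subset[rotated]) (auto simp: power_alg_def)
qed

text \<open>The power in the theorem is indexed by sets of maps into \<open>\<real>\<close>; only singletons matter,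
  and \<open>decode\<close> recovers the map from them.\<close>

definition decode :: "('a \<Rightarrow> real) set \<Rightarrow> 'a \<Rightarrow> real" where
  "decode i = (SOME \<phi>. \<phi> \<in> i)"

lemma decode_singleton [simp]: "decode {\<phi>} = \<phi>"
  by (simp add: decode_def)

context sigma_lattice_ab_group
begin

definition violators :: "'a op_instance \<Rightarrow> ('a \<Rightarrow> real) set set" where
  "violators \<iota> = {i. \<not> preserves_instance (decode i) \<iota>}"

lemma ae_eq_violators:
  assumes "\<And>i. preserves_instance (decode i) \<iota> \<Longrightarrow> u i = v i"
  shows "ae_eq violators u v"
proof (rule ae_eq_if_subset)
  show "{i. u i \<noteq> v i} \<subseteq> violators \<iota>" using assms by (auto simp: violators_def)
qed (rule countably_covered_subset[OF subset_refl])

lemma ae_eq_violators_evaluation_imp_eq: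
  assumes "ae_eq violators (\<lambda>i. decode i x) (\<lambda>i. decode i y)"
  shows "x = y"
proof (rule ccontr)
  assume "x \<noteq> y"
  obtain F :: "nat \<Rightarrow> 'a op_instance"
    where F: "{i. decode i x \<noteq> decode i y} \<subseteq> (\<Union>n. violators (F n))"
    using assms by (auto simp: ae_eq_def countably_covered_def)
  obtain \<phi> where \<phi>: "\<phi> x \<noteq> \<phi> y" "\<And>n. preserves_instance \<phi> (F n)"
    using exists_separating_map[OF \<open>x \<noteq> y\<close>, of F] by blast
  then have "{\<phi>} \<in> {i. decode i x \<noteq> decode i y}" by simp
  then obtain n where "{\<phi>} \<in> violators (F n)" using F by blast
  then show False using \<phi>(2) by (simp add: violators_def)
qed

end

theorem mainTheorem12:
  fixes G :: "'a sl_alg"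
  assumes "in_V_slG G"
  shows "\<exists>(\<theta> :: (('a \<Rightarrow> real) set \<Rightarrow> real) \<Rightarrow> (('a \<Rightarrow> real) set \<Rightarrow> real) \<Rightarrow> bool) e.
           congruence power_alg \<theta> \<and> embeds_into_quotient G power_alg \<theta> e"
proof -
  interpret G: sigma_lattice_ab_group "splus G" "szero G" "\<lambda>x y. splus G x (sneg G y)" "sneg G"
    "\<lambda>x y. smeet G x y = x" "\<lambda>x y. smeet G x y = x \<and> smeet G y x \<noteq> y" "smeet G" "sjoin G" "sbv G"
    by (rule sigma_lattice_ab_group_if_in_V_slG[OF assms])
  let ?\<theta> = "ae_eq G.violators" and ?e = "\<lambda>x i. decode i x"
  have "embeds_into_quotient G power_alg ?\<theta> ?e"
    unfolding embeds_into_quotient_def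
    using G.ae_eq_violators_evaluation_imp_eq equivp_reflp[OF equivp_ae_eq]
      G.ae_eq_violators[of Inst_zero] G.ae_eq_violators[of "Inst_plus _ _"]
      G.ae_eq_violators[of "Inst_uminus _"] G.ae_eq_violators[of "Inst_sup _ _"]
      G.ae_eq_violators[of "Inst_inf _ _"] G.ae_eq_violators[of "Inst_bjoin _ _"]
    by (auto simp: power_alg_def)
  then show ?thesis using congruence_power_ae_eq by blast
qed

end
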